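(* For any $(K,\Sigma)\in\Omega$, $$S_{K,\Sigma}=\mu\sum_{t=0}^\infty(\gamma V_K)^t+\frac{\mathrm{Tr}(\Sigma(B^\top B+D^\top D))}{1-V_K}\Big[\frac{1}{1-\gamma}-\frac{1}{1-\gamma V_K}\Big].$$ Furthermore, $$\frac{\mu}{1-\gamma V_K}\le S_{K,\Sigma}\le\frac{f(K,\Sigma)-(1-\gamma)^{-1}\big[\mathrm{Tr}(\Sigma R)-\frac{\tau}{2}\big(n+\log((2\pi)^n\det\Sigma)\big)\big]}{Q}.$$
   Context: Setting: $n\ge1$, $A,C\in\mathbb{R}$, $B\in\mathbb{R}^{1\times n}$ (row vector), $D\in\mathbb{R}^{n\times n}$, $Q>0$, $R\in\mathbb{R}^{n\times n}$ symmetric positive definite, $\gamma\in(0,1)$, $\tau>0$. Dynamics $x_{t+1}=(A+w_t^xC)x_t+(B+w_t^uD)u_t$ with $x_t\in\mathbb{R}$, $u_t\in\mathbb{R}^n$, white noises $w_t^x\in\mathbb{R}$, $w_t^u\in\mathbb{R}^{1\times n}$ independent across time, of each other and of the controls, zero mean, $\mathbb{E}(w_t^x)^2=1$, $\mathbb{E}[(w_t^u)^\top w_t^u]=I_n$. Policy $u_t\sim\mathcal N(-Kx_t,\Sigma)$ with density $\pi_{K,\Sigma}(\cdot|x)$. $V_K=A^2+C^2+K^\top(B^\top B+D^\top D)K-2ABK$, $\Omega=\{(K,\Sigma):K\in\mathbb{R}^n,\ \Sigma=\Sigma^\top\succ0,\ \gamma V_K<1\}$. $x_0\sim\mathcal D$,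 $\mu=\mathbb{E}x_0^2$. $S_{K,\Sigma}=\sum_{t\ge0}\gamma^t\mathbb{E}[x_t^2]$ and $f(K,\Sigma)=\mathbb{E}\big[\sum_{t\ge0}\gamma^t(Qx_t^2+u_t^\top Ru_t+\tau\log\pi_{K,\Sigma}(u_t|x_t))\big]$, both under the policy $(K,\Sigma)$. *)

theory Defs
  imports "HOL-Probability.Probability"
begin

definition outer :: "real^'n \<Rightarrow> real^'n^'n" where
  "outer b = (\<chi> i j. b $ i * b $ j)"

definition sym_pd :: "real^'n^'n \<Rightarrow> bool" where
  "sym_pd M \<longleftrightarrow> transpose M = M \<and> (\<forall>v. v \<noteq> 0 \<longrightarrow> v \<bullet> (M *v v) > 0)"

definition V_K :: "real \<Rightarrow> real^'n \<Rightarrow> real \<Rightarrow> real^'n^'n \<Rightarrow> real^'n \<Rightarrow> real" where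
  "V_K A B C D K = A^2 + C^2 + K \<bullet> ((outer B + transpose D ** D) *v K) - 2 * A * (B \<bullet> K)"

definition gauss_dens :: "real^'n^'n \<Rightarrow> real^'n \<Rightarrow> real^'n \<Rightarrow> real" where
  "gauss_dens Sig m v =
     exp (- (1/2) * ((v - m) \<bullet> (matrix_inv Sig *v (v - m))))
     / sqrt ((2 * pi) ^ CARD('n) * det Sig)"

definition policy_dens :: "real^'n \<Rightarrow> real^'n^'n \<Rightarrow> real \<Rightarrow> real^'n \<Rightarrow> real" where
  "policy_dens K Sig x u = gauss_dens Sig (- (x *\<^sub>R K)) u"

definition gen_events :: "'a measure \<Rightarrow> 'b measure \<Rightarrow> ('a \<Rightarrow> 'b) \<Rightarrow> 'a set set" where
  "gen_events M N X = {X -` A \<inter> space M | A. A \<in> sets N}"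

text \<open>Index of the primitive sources of randomness: initial state, state noise,
  control noise, and the exploration randomness of the Gaussian policy at each time.\<close>
datatype src = Src0 | SrcWX nat | SrcWU nat | SrcXi nat

end

theory Submission
  imports Defs
begin

text \<open>Under the Gaussian policy the state obeys \<open>x(t+1) = x(t) a(t) + \<Sum>\<^sub>i \<xi>\<^sub>i(t) b\<^sub>i(t)\<close>,
  where the gains \<open>a(t)\<close>, \<open>b\<^sub>i(t)\<close> are affine in the multiplicative noises of step \<open>t\<close> and
  \<open>\<xi>(t)\<close> is the exploration noise. Since \<open>x(t)\<close>, the noises of step \<open>t\<close> and \<open>\<xi>(t)\<close> are
  independent, the cross terms vanish and the second moments obey the affine recursion
  \<open>E x(t+1)\<^sup>2 = V\<^sub>K E x(t)\<^sup>2 + tr(\<Sigma>(B\<^sup>TB + D\<^sup>TD))\<close>, whose discounted sum is explicit.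
  The expected stage cost is \<open>(Q + K\<^sup>TRK) E x(t)\<^sup>2\<close> plus the constant
  \<open>tr(\<Sigma>R) - \<tau>/2 (n + log((2\<pi>)\<^sup>n det \<Sigma>))\<close>, so \<open>f = (Q + K\<^sup>TRK) S + const/(1 - \<gamma>)\<close>
  and \<open>K\<^sup>TRK \<ge> 0\<close> gives the upper bound. The Gaussian moments are read off the moment
  generating function \<open>E exp(b\<cdot>\<xi>) = exp(b\<^sup>T\<Sigma>b/2)\<close>.\<close>

section \<open>Symmetric positive definite matrices\<close>

lemma matrix_inv_left:
  fixes A :: "'a::semiring_1^'n^'m"
  assumes "invertible A"
  shows "matrix_inv A ** A = mat 1"
  using someI_ex[OF assms[unfolded invertible_def]] unfolding matrix_inv_def by auto

lemma matrix_inv_right: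
  fixes A :: "'a::semiring_1^'n^'m"
  assumes "invertible A"
  shows "A ** matrix_inv A = mat 1"
  using someI_ex[OF assms[unfolded invertible_def]] unfolding matrix_inv_def by auto

lemma transpose_matrix_inv_symmetric:
  fixes A :: "'a::comm_semiring_1^'n^'n"
  assumes inv: "invertible A" and sym: "transpose A = A"
  shows "transpose (matrix_inv A) = matrix_inv A"
proof -
  have "transpose (matrix_inv A) ** A = mat 1"
    using arg_cong[OF matrix_inv_right[OF inv], of transpose]
    by (simp add: matrix_transpose_mul sym transpose_mat)
  then have "transpose (matrix_inv A) = (transpose (matrix_inv A) ** A) ** matrix_inv A"
    by (metis matrix_mul_assoc matrix_inv_right[OF inv] matrix_mul_rid)
  also have "\<dots> = matrix_inv A"
    using \<open>transpose (matrix_inv A) ** A = mat 1\<close> by (simp only: matrix_mul_lid)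
  finally show ?thesis .
qed

lemma symmetric_matrix_inner_swap:
  fixes S :: "real^'n^'n"
  assumes "transpose S = S"
  shows "a \<bullet> (S *v v) = v \<bullet> (S *v a)"
  by (metis assms dot_lmul_matrix inner_commute transpose_transpose vector_transpose_matrix)

lemma quadratic_form_sum:
  fixes N :: "real^'n^'n"
  shows "v \<bullet> (N *v v) = (\<Sum>i\<in>UNIV. \<Sum>j\<in>UNIV. N $ i $ j * (v $ i * v $ j))"
  by (simp add: inner_vec_def matrix_vector_mult_def sum_distrib_left algebra_simps)

lemma trace_mult_symmetric:
  fixes N S :: "real^'n^'n"
  assumes "transpose S = S"
  shows "trace (N ** S) = (\<Sum>i\<in>UNIV. \<Sum>j\<in>UNIV. N $ i $ j * S $ i $ j)"
proof -
  have "S $ j $ i = S $ i $ j" for i j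
    by (metis assms transpose_def vec_lambda_beta)
  then show ?thesis
    by (simp add: trace_def matrix_matrix_mult_def)
qed

lemma inner_matrix_vector_mult_columns:
  fixes z v :: "real^'n" and D :: "real^'n^'n"
  shows "z \<bullet> (D *v v) = (\<Sum>i\<in>UNIV. v $ i * (z \<bullet> column i D))"
proof -
  have "z \<bullet> (D *v v) = (\<Sum>k\<in>UNIV. \<Sum>i\<in>UNIV. z $ k * (D $ k $ i * v $ i))"
    by (simp add: inner_vec_def matrix_vector_mult_def sum_distrib_left)
  also have "\<dots> = (\<Sum>i\<in>UNIV. \<Sum>k\<in>UNIV. z $ k * (D $ k $ i * v $ i))"
    by (rule sum.swap)
  also have "\<dots> = (\<Sum>i\<in>UNIV. v $ i * (z \<bullet> column i D))"
    by (simp add: inner_vec_def column_def sum_distrib_left algebra_simps)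
  finally show ?thesis .
qed

lemma sym_pd_invertible:
  fixes S :: "real^'n^'n"
  assumes "sym_pd S"
  shows "invertible S"
proof -
  have "S *v x = 0 \<Longrightarrow> x = 0" for x
    using assms unfolding sym_pd_def by (metis inner_zero_right less_irrefl)
  then show ?thesis
    unfolding invertible_left_inverse matrix_left_invertible_ker by blast
qed

lemma sym_pd_quadratic_nonneg:
  fixes S :: "real^'n^'n"
  assumes "sym_pd S"
  shows "0 \<le> v \<bullet> (S *v v)"
  using assms unfolding sym_pd_def by (cases "v = 0") (auto intro: less_imp_le)

lemma sym_pd_inverse_quadratic_nonneg:
  fixes S :: "real^'n^'n"
  assumes "sym_pd S"
  shows "0 \<le> v \<bullet> (matrix_inv S *v v)"
proof -
  let ?w = "matrix_inv S *v v"
  have "v = S *v ?w"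
    by (simp add: matrix_vector_mul_assoc matrix_inv_right[OF sym_pd_invertible[OF assms]])
  then have "v \<bullet> ?w = ?w \<bullet> (S *v ?w)"
    by (metis inner_commute)
  then show ?thesis
    using sym_pd_quadratic_nonneg[OF assms] by simp
qed

lemma trace_sym_pd_gram_nonneg:
  fixes S D :: "real^'n^'n" and b :: "real^'n"
  assumes "sym_pd S"
  shows "0 \<le> trace (S ** (outer b + transpose D ** D))"
proof -
  let ?G = "outer b + transpose D ** D"
  have G: "?G $ i $ j = b $ i * b $ j + (\<Sum>k\<in>UNIV. D $ k $ i * D $ k $ j)" for i j
    by (simp add: outer_def matrix_matrix_mult_def transpose_def)
  have "trace (S ** ?G) = (\<Sum>i\<in>UNIV. \<Sum>j\<in>UNIV. ?G $ i $ j * S $ i $ j)"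
    using assms unfolding sym_pd_def by (subst trace_mul_sym) (rule trace_mult_symmetric, simp)
  also have "\<dots> = (\<Sum>i\<in>UNIV. \<Sum>j\<in>UNIV. S $ i $ j * ?G $ i $ j)"
    by (simp add: mult.commute)
  also have "\<dots> = (\<Sum>i\<in>UNIV. \<Sum>j\<in>UNIV. S $ i $ j * (b $ i * b $ j)
      + (\<Sum>k\<in>UNIV. S $ i $ j * (D $ k $ i * D $ k $ j)))"
    unfolding G by (simp add: distrib_left sum_distrib_left)
  also have "\<dots> = b \<bullet> (S *v b)
      + (\<Sum>i\<in>UNIV. \<Sum>j\<in>UNIV. \<Sum>k\<in>UNIV. S $ i $ j * (D $ k $ i * D $ k $ j))"
    by (simp add: sum.distrib quadratic_form_sum)
  also have "(\<Sum>i\<in>UNIV. \<Sum>j\<in>UNIV. \<Sum>k\<in>UNIV. S $ i $ j * (D $ k $ i * D $ k $ j))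
      = (\<Sum>k\<in>UNIV. (D $ k) \<bullet> (S *v (D $ k)))"
    unfolding quadratic_form_sum by (subst sum.swap) (subst (2) sum.swap, rule refl)
  finally have "trace (S ** ?G) = b \<bullet> (S *v b) + (\<Sum>k\<in>UNIV. (D $ k) \<bullet> (S *v (D $ k)))" .
  also have "\<dots> \<ge> 0"
    using sym_pd_quadratic_nonneg[OF assms] by (intro add_nonneg_nonneg sum_nonneg) auto
  finally show ?thesis .
qed

section \<open>Moments of a Gaussian vector\<close>

lemma power_div_fact_le_exp:
  fixes x :: real
  assumes "0 \<le> x"
  shows "x ^ n / fact n \<le> exp x"
proof -
  obtain t where "exp x = (\<Sum>m<Suc n. x ^ m / fact m) + exp t / fact (Suc n) * x ^ Suc n"
    using Maclaurin_exp_le[of x "Suc n"] by blast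
  moreover have "x ^ n / fact n \<le> (\<Sum>m<Suc n. x ^ m / fact m)"
    using assms by (intro member_le_sum) auto
  moreover have "0 \<le> exp t / fact (Suc n) * x ^ Suc n"
    using assms by simp
  ultimately show ?thesis
    by linarith
qed

lemma abs_exp_Maclaurin_remainder_le:
  fixes x :: real
  shows "\<bar>exp x - (\<Sum>m<n. x ^ m / fact m)\<bar> \<le> \<bar>x\<bar> ^ n * exp \<bar>x\<bar> / fact n"
proof -
  obtain t where t: "\<bar>t\<bar> \<le> \<bar>x\<bar>"
    and exp_eq: "exp x = (\<Sum>m<n. x ^ m / fact m) + exp t / fact n * x ^ n"
    using Maclaurin_exp_le[of x n] by blast
  have "exp t * \<bar>x\<bar> ^ n \<le> exp \<bar>x\<bar> * \<bar>x\<bar> ^ n"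
    using t by (intro mult_right_mono) auto
  then show ?thesis
    unfolding exp_eq by (simp add: abs_mult power_abs divide_right_mono mult.commute)
qed

lemma abs_le_small_multiples_imp_zero:
  fixes a K :: real
  assumes "\<And>s. 0 < s \<Longrightarrow> s \<le> 1 \<Longrightarrow> \<bar>a\<bar> \<le> s * K"
  shows "a = 0"
proof (rule ccontr)
  assume "a \<noteq> 0"
  have "\<bar>a\<bar> \<le> K"
    using assms[of 1] by simp
  define s where "s = \<bar>a\<bar> / (2 * K)"
  have "0 < s" "s \<le> 1"
    using \<open>a \<noteq> 0\<close> \<open>\<bar>a\<bar> \<le> K\<close> by (auto simp: s_def field_simps)
  then have "\<bar>a\<bar> \<le> s * K"
    by (rule assms)
  also have "\<dots> = \<bar>a\<bar> / 2"
    using \<open>a \<noteq> 0\<close> \<open>\<bar>a\<bar> \<le> K\<close> by (simp add: s_def)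
  finally show False
    using \<open>a \<noteq> 0\<close> by simp
qed

text \<open>Comparing the bound at \<open>s\<close> and \<open>-s\<close> separates the odd and the even coefficient.\<close>
lemma cubic_bound_imp_coeffs_zero:
  fixes a b K :: real
  assumes bound: "\<And>s. 0 < \<bar>s\<bar> \<Longrightarrow> \<bar>s\<bar> \<le> 1 \<Longrightarrow> \<bar>s * a + s^2 * b\<bar> \<le> \<bar>s\<bar>^3 * K"
  shows "a = 0" "b = 0"
proof -
  have K: "0 \<le> K"
    using bound[of 1] by simp
  have pm: "\<bar>s * a + s^2 * b\<bar> \<le> s^3 * K" "\<bar>- (s * a) + s^2 * b\<bar> \<le> s^3 * K"
    if "0 < s" "s \<le> 1" for s
    using bound[of s] bound[of "-s"] that by auto
  show "a = 0"
  proof (rule abs_le_small_multiples_imp_zero)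
    fix s :: real assume s: "0 < s" "s \<le> 1"
    have "\<bar>2 * (s * a)\<bar> \<le> 2 * (s^3 * K)"
      using pm[OF s] by linarith
    then have "s * \<bar>a\<bar> \<le> s * (s^2 * K)"
      using s by (simp add: abs_mult power3_eq_cube power2_eq_square mult.assoc)
    then have "\<bar>a\<bar> \<le> s^2 * K"
      using s by simp
    also have "\<dots> \<le> s * K"
      using s K by (intro mult_right_mono) (auto simp: power2_eq_square)
    finally show "\<bar>a\<bar> \<le> s * K" .
  qed
  show "b = 0"
  proof (rule abs_le_small_multiples_imp_zero)
    fix s :: real assume s: "0 < s" "s \<le> 1"
    have "\<bar>2 * (s^2 * b)\<bar> \<le> 2 * (s^3 * K)"
      using pm[OF s] by linarith
    then have "s^2 * \<bar>b\<bar> \<le> s^2 * (s * K)"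
      using s by (simp add: abs_mult power3_eq_cube power2_eq_square mult.assoc)
    then show "\<bar>b\<bar> \<le> s * K"
      using s by simp
  qed
qed

lemma abs_exp_second_order_remainder_le:
  fixes s x :: real
  assumes "\<bar>s\<bar> \<le> 1"
  shows "\<bar>exp (s * x) - (1 + s * x + (s * x)^2 / 2)\<bar> \<le> \<bar>s\<bar>^3 * (\<bar>x\<bar>^3 * exp \<bar>x\<bar>) / 6"
proof -
  have "exp \<bar>s * x\<bar> \<le> exp \<bar>x\<bar>"
    using assms by (simp add: abs_mult mult_left_le_one_le)
  have "\<bar>exp (s * x) - (1 + s * x + (s * x)^2 / 2)\<bar> \<le> \<bar>s * x\<bar>^3 * exp \<bar>s * x\<bar> / 6"
    using abs_exp_Maclaurin_remainder_le[of "s * x" 3]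
    by (simp add: eval_nat_numeral fact_numeral power2_eq_square)
  also have "\<dots> = \<bar>s\<bar>^3 * (\<bar>x\<bar>^3 * exp \<bar>s * x\<bar>) / 6"
    by (simp add: abs_mult power_mult_distrib)
  also have "\<dots> \<le> \<bar>s\<bar>^3 * (\<bar>x\<bar>^3 * exp \<bar>x\<bar>) / 6"
    using \<open>exp \<bar>s * x\<bar> \<le> exp \<bar>x\<bar>\<close> by (intro divide_right_mono mult_left_mono) auto
  finally show ?thesis .
qed

lemma abs_exp_gaussian_mgf_remainder_le:
  fixes s c :: real
  assumes s: "\<bar>s\<bar> \<le> 1" and c: "0 \<le> c"
  shows "\<bar>exp (s^2 * c / 2) - (1 + s^2 * c / 2)\<bar> \<le> \<bar>s\<bar>^3 * (c^2 * exp (c / 2) / 8)"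
proof -
  have "s^2 \<le> 1"
    using s by (simp add: abs_square_le_1)
  have "s^4 = \<bar>s\<bar>^3 * \<bar>s\<bar>"
    by (simp add: power_even_abs[symmetric] eval_nat_numeral)
  then have "s^4 \<le> \<bar>s\<bar>^3"
    using s by (simp add: mult_right_le_one_le)
  have "\<bar>exp (s^2 * c / 2) - (1 + s^2 * c / 2)\<bar> \<le> (s^2 * c / 2)^2 * exp (s^2 * c / 2) / 2"
    using abs_exp_Maclaurin_remainder_le[of "s^2 * c / 2" 2] c by (simp add: eval_nat_numeral)
  also have "\<dots> = s^4 * (c^2 * exp (s^2 * c / 2) / 8)"
    by (simp add: power_mult_distrib eval_nat_numeral)
  also have "\<dots> \<le> \<bar>s\<bar>^3 * (c^2 * exp (c / 2) / 8)"
    using \<open>s^4 \<le> \<bar>s\<bar>^3\<close> \<open>s^2 \<le> 1\<close> c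
    by (intro mult_mono divide_right_mono mult_left_mono) (auto simp: mult_left_le_one_le)
  finally show ?thesis .
qed

lemma gauss_dens_exp_tilt:
  fixes S :: "real^'n^'n"
  assumes S: "sym_pd S"
  shows "gauss_dens S 0 v * exp (b \<bullet> v)
       = gauss_dens S 0 (v - S *v b) * exp (b \<bullet> (S *v b) / 2)"
proof -
  let ?P = "matrix_inv S" and ?Z = "sqrt ((2 * pi) ^ CARD('n) * det S)"
  have inv: "invertible S"
    using S by (rule sym_pd_invertible)
  have P_S: "?P *v (S *v b) = b"
    by (simp add: matrix_vector_mul_assoc matrix_inv_left[OF inv])
  have "transpose ?P = ?P"
    using inv S by (intro transpose_matrix_inv_symmetric) (auto simp: sym_pd_def)
  then have "(S *v b) \<bullet> (?P *v v) = v \<bullet> b"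
    using P_S by (metis symmetric_matrix_inner_swap)
  then have quad: "(v - S *v b) \<bullet> (?P *v (v - S *v b))
      = v \<bullet> (?P *v v) - 2 * (b \<bullet> v) + b \<bullet> (S *v b)"
    by (simp add: matrix_vector_mult_diff_distrib inner_diff_left inner_diff_right P_S
        inner_commute)
  have "gauss_dens S 0 v * exp (b \<bullet> v) = exp (- (1/2) * (v \<bullet> (?P *v v)) + b \<bullet> v) / ?Z"
    unfolding gauss_dens_def exp_add by simp
  also have "\<dots> = exp (- (1/2) * ((v - S *v b) \<bullet> (?P *v (v - S *v b))) + b \<bullet> (S *v b) / 2) / ?Z"
    unfolding quad by (simp add: algebra_simps)
  also have "\<dots> = gauss_dens S 0 (v - S *v b) * exp (b \<bullet> (S *v b) / 2)"
    unfolding gauss_dens_def exp_add by simp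
  finally show ?thesis .
qed

context prob_space
begin

lemma gauss_dens_nn_integral:
  assumes "distributed M lborel X (\<lambda>v. ennreal (gauss_dens S 0 v))"
  shows "(\<integral>\<^sup>+v. ennreal (gauss_dens S 0 v) \<partial>lborel) = 1"
  using distributed_nn_integral[OF assms, of "\<lambda>_. 1"] by (simp add: emeasure_space_1)

lemma gauss_normalizer_pos:
  fixes S :: "real^'n^'n"
  assumes "distributed M lborel X (\<lambda>v. ennreal (gauss_dens S 0 v))"
  shows "0 < (2 * pi) ^ CARD('n) * det S"
proof (rule ccontr)
  assume "\<not> ?thesis"
  then have "gauss_dens S 0 v \<le> 0" for v
    unfolding gauss_dens_def by (intro divide_nonneg_nonpos) auto
  then have "(\<integral>\<^sup>+v. ennreal (gauss_dens S 0 v) \<partial>lborel) = 0"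
    by (simp add: ennreal_neg)
  with gauss_dens_nn_integral[OF assms] show False
    by simp
qed

lemma gauss_mgf:
  fixes S :: "real^'n^'n" and X :: "'a \<Rightarrow> real^'n"
  assumes S: "sym_pd S" and X: "distributed M lborel X (\<lambda>v. ennreal (gauss_dens S 0 v))"
  shows "(\<integral>\<^sup>+\<omega>. ennreal (exp (b \<bullet> X \<omega>)) \<partial>M) = ennreal (exp (b \<bullet> (S *v b) / 2))"
proof -
  let ?g = "\<lambda>v. ennreal (gauss_dens S 0 v)" and ?c = "ennreal (exp (b \<bullet> (S *v b) / 2))"
  have [measurable]: "?g \<in> borel_measurable lborel"
    using X by (rule distributed_borel_measurable)
  have "(\<integral>\<^sup>+\<omega>. ennreal (exp (b \<bullet> X \<omega>)) \<partial>M) = (\<integral>\<^sup>+v. ?g v * ennreal (exp (b \<bullet> v)) \<partial>lborel)"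
    by (rule distributed_nn_integral[OF X, symmetric]) simp
  also have "\<dots> = (\<integral>\<^sup>+v. ?g (- (S *v b) + v) * ?c \<partial>lborel)"
    by (intro nn_integral_cong)
       (simp add: gauss_dens_exp_tilt[OF S] ennreal_mult''[symmetric])
  also have "\<dots> = (\<integral>\<^sup>+v. ?g (- (S *v b) + v) \<partial>lborel) * ?c"
    by (rule nn_integral_multc) measurable
  also have "(\<integral>\<^sup>+v. ?g (- (S *v b) + v) \<partial>lborel) = (\<integral>\<^sup>+v. ?g v \<partial>lborel)"
    by (subst (2) lborel_distr_plus[symmetric, of "- (S *v b)"]) (simp add: nn_integral_distr)
  finally show ?thesis
    using gauss_dens_nn_integral[OF X] by simp
qed

lemma integrable_exp_dominated:
  fixes X :: "'a \<Rightarrow> real"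
  assumes exp_int: "\<And>s. integrable M (\<lambda>\<omega>. exp (s * X \<omega>))"
    and [measurable]: "f \<in> borel_measurable M" and f: "\<And>\<omega>. \<bar>f \<omega>\<bar> \<le> C * exp (s * \<bar>X \<omega>\<bar>)"
  shows "integrable M f"
proof (rule Bochner_Integration.integrable_bound)
  show "integrable M (\<lambda>\<omega>. \<bar>C\<bar> * (exp (s * X \<omega>) + exp ((- s) * X \<omega>)))"
    using exp_int[of s] exp_int[of "- s"] by simp
  have "exp (s * \<bar>x\<bar>) \<le> exp (s * x) + exp ((- s) * x)" for x
    by (cases "0 \<le> x") (auto intro: add_increasing add_increasing2 less_imp_le)
  then have "C * exp (s * \<bar>X \<omega>\<bar>) \<le> \<bar>C\<bar> * (exp (s * X \<omega>) + exp ((- s) * X \<omega>))" for \<omega>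
    by (intro mult_mono) auto
  then have "\<bar>f \<omega>\<bar> \<le> \<bar>C\<bar> * (exp (s * X \<omega>) + exp ((- s) * X \<omega>))" for \<omega>
    using f[of \<omega>] by (meson order_trans)
  then show "AE \<omega> in M. norm (f \<omega>) \<le> norm (\<bar>C\<bar> * (exp (s * X \<omega>) + exp ((- s) * X \<omega>)))"
    by (intro AE_I2) (simp add: add_nonneg_nonneg)
qed simp

lemma integrable_moments_of_exp_integrable:
  fixes X :: "'a \<Rightarrow> real"
  assumes [measurable]: "X \<in> borel_measurable M"
    and exp_int: "\<And>s. integrable M (\<lambda>\<omega>. exp (s * X \<omega>))"
  shows "integrable M X" "integrable M (\<lambda>\<omega>. (X \<omega>)^2)"
    and "integrable M (\<lambda>\<omega>. \<bar>X \<omega>\<bar>^3 * exp \<bar>X \<omega>\<bar>)"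
proof -
  have power_le: "\<bar>x\<bar> ^ n \<le> fact n * exp (1 * \<bar>x\<bar>)" for x :: real and n
    using power_div_fact_le_exp[of "\<bar>x\<bar>" n] by (simp add: field_simps)
  show "integrable M X"
    using power_le[of _ 1] by (intro integrable_exp_dominated[OF exp_int, of _ 1 1]) simp_all
  show "integrable M (\<lambda>\<omega>. (X \<omega>)^2)"
    using power_le[of _ 2] by (intro integrable_exp_dominated[OF exp_int, of _ 2 1]) simp_all
  show "integrable M (\<lambda>\<omega>. \<bar>X \<omega>\<bar>^3 * exp \<bar>X \<omega>\<bar>)"
  proof (rule integrable_exp_dominated[OF exp_int, of _ 6 2])
    fix \<omega>
    have "\<bar>\<bar>X \<omega>\<bar>^3 * exp \<bar>X \<omega>\<bar>\<bar> \<le> (6 * exp \<bar>X \<omega>\<bar>) * exp \<bar>X \<omega>\<bar>"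
      using power_le[of "X \<omega>" 3] by (simp add: fact_numeral)
    also have "\<dots> = 6 * exp (2 * \<bar>X \<omega>\<bar>)"
      by (simp add: mult_exp_exp)
    finally show "\<bar>\<bar>X \<omega>\<bar>^3 * exp \<bar>X \<omega>\<bar>\<bar> \<le> 6 * exp (2 * \<bar>X \<omega>\<bar>)" .
  qed simp
qed

text \<open>Expand both sides of \<open>E exp(sX) = exp(s\<^sup>2c/2)\<close> to second order in \<open>s\<close>, with cubic
  remainders; the coefficients of \<open>s\<close> and \<open>s\<^sup>2\<close> must then agree.\<close>
lemma moments_of_gaussian_mgf:
  fixes X :: "'a \<Rightarrow> real"
  assumes X[measurable]: "X \<in> borel_measurable M" and c: "0 \<le> c"
    and mgf: "\<And>s. (\<integral>\<^sup>+\<omega>. ennreal (exp (s * X \<omega>)) \<partial>M) = ennreal (exp (s^2 * c / 2))"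
  shows "integrable M X" "expectation X = 0"
    and "integrable M (\<lambda>\<omega>. (X \<omega>)^2)" "expectation (\<lambda>\<omega>. (X \<omega>)^2) = c"
proof -
  have exp_int: "integrable M (\<lambda>\<omega>. exp (s * X \<omega>))"
    and exp_exp: "expectation (\<lambda>\<omega>. exp (s * X \<omega>)) = exp (s^2 * c / 2)" for s
    using nn_integral_eq_integrable[THEN iffD1, OF _ _ _ mgf[of s]] by auto
  note int = integrable_moments_of_exp_integrable[OF X exp_int]
  define K3 where "K3 = expectation (\<lambda>\<omega>. \<bar>X \<omega>\<bar>^3 * exp \<bar>X \<omega>\<bar>)"
  define E2 where "E2 = expectation (\<lambda>\<omega>. (X \<omega>)^2)"
  have "\<bar>s * expectation X + s^2 * ((E2 - c) / 2)\<bar> \<le> \<bar>s\<bar>^3 * (K3 / 6 + c^2 * exp (c / 2) / 8)"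
    if s: "0 < \<bar>s\<bar>" "\<bar>s\<bar> \<le> 1" for s
  proof -
    let ?R = "\<lambda>\<omega>. exp (s * X \<omega>) - (1 + s * X \<omega> + (s * X \<omega>)^2 / 2)"
    have "\<bar>expectation ?R\<bar> \<le> expectation (\<lambda>\<omega>. \<bar>s\<bar>^3 * (\<bar>X \<omega>\<bar>^3 * exp \<bar>X \<omega>\<bar>) / 6)"
      using exp_int int abs_exp_second_order_remainder_le[OF s(2)]
      by (intro order_trans[OF integral_abs_bound] integral_mono) (auto simp: power_mult_distrib)
    then have "\<bar>expectation ?R\<bar> \<le> \<bar>s\<bar>^3 * (K3 / 6)"
      by (simp add: K3_def)
    moreover have "s * expectation X + s^2 * ((E2 - c) / 2)
        = (exp (s^2 * c / 2) - (1 + s^2 * c / 2)) - expectation ?R"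
      using exp_int int by (simp add: exp_exp prob_space power_mult_distrib E2_def field_simps)
    ultimately show ?thesis
      using abs_exp_gaussian_mgf_remainder_le[OF s(2) c]
        abs_triangle_ineq4[of "exp (s^2 * c / 2) - (1 + s^2 * c / 2)" "expectation ?R"]
      by (simp only: distrib_left)
  qed
  then have "expectation X = 0" "(E2 - c) / 2 = 0"
    by (fact cubic_bound_imp_coeffs_zero)+
  then show "integrable M X" "expectation X = 0"
    "integrable M (\<lambda>\<omega>. (X \<omega>)^2)" "expectation (\<lambda>\<omega>. (X \<omega>)^2) = c"
    using int by (simp_all add: E2_def)
qed

lemma gauss_moments:
  fixes S :: "real^'n^'n" and X :: "'a \<Rightarrow> real^'n"
  assumes S: "sym_pd S" and X: "distributed M lborel X (\<lambda>v. ennreal (gauss_dens S 0 v))"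
  shows "integrable M (\<lambda>\<omega>. X \<omega> $ i)" "expectation (\<lambda>\<omega>. X \<omega> $ i) = 0"
    and "integrable M (\<lambda>\<omega>. X \<omega> $ i * X \<omega> $ j)"
    and "expectation (\<lambda>\<omega>. X \<omega> $ i * X \<omega> $ j) = S $ i $ j"
proof -
  have [measurable]: "X \<in> borel_measurable M"
    using distributed_measurable[OF X] by simp
  have S_sym: "S $ l $ k = S $ k $ l" for k l
    using S unfolding sym_pd_def by (metis transpose_def vec_lambda_beta)
  have lin: "integrable M (\<lambda>\<omega>. b \<bullet> X \<omega>)" "expectation (\<lambda>\<omega>. b \<bullet> X \<omega>) = 0"
    "integrable M (\<lambda>\<omega>. (b \<bullet> X \<omega>)^2)" "expectation (\<lambda>\<omega>. (b \<bullet> X \<omega>)^2) = b \<bullet> (S *v b)" for b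
  proof -
    have "(\<integral>\<^sup>+\<omega>. ennreal (exp (s * (b \<bullet> X \<omega>))) \<partial>M) = ennreal (exp (s^2 * (b \<bullet> (S *v b)) / 2))" for s
      using gauss_mgf[OF S X, of "s *\<^sub>R b"]
      by (simp add: matrix_vector_mult_scaleR power2_eq_square mult.assoc)
    from moments_of_gaussian_mgf[OF _ sym_pd_quadratic_nonneg[OF S] this]
    show "integrable M (\<lambda>\<omega>. b \<bullet> X \<omega>)" "expectation (\<lambda>\<omega>. b \<bullet> X \<omega>) = 0"
      "integrable M (\<lambda>\<omega>. (b \<bullet> X \<omega>)^2)" "expectation (\<lambda>\<omega>. (b \<bullet> X \<omega>)^2) = b \<bullet> (S *v b)"
      by simp_all
  qed
  have coord: "axis k 1 \<bullet> x = x $ k" for k and x :: "real^'n"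
    by (simp add: inner_axis')
  have entry: "axis k 1 \<bullet> (S *v axis l 1) = S $ k $ l" for k l
    by (simp add: inner_axis' matrix_vector_mul_component inner_axis)
  show "integrable M (\<lambda>\<omega>. X \<omega> $ i)" "expectation (\<lambda>\<omega>. X \<omega> $ i) = 0"
    using lin(1,2)[of "axis i 1"] by (simp_all add: coord)
  let ?b = "axis i 1 + axis j 1"
  have polar: "X \<omega> $ i * X \<omega> $ j
      = ((?b \<bullet> X \<omega>)^2 - (axis i 1 \<bullet> X \<omega>)^2 - (axis j 1 \<bullet> X \<omega>)^2) / 2" for \<omega>
    by (simp add: inner_add_left coord power2_eq_square algebra_simps)
  have "?b \<bullet> (S *v ?b) = S $ i $ i + 2 * S $ i $ j + S $ j $ j"
    by (simp add: inner_add_left matrix_vector_right_distrib inner_add_right entry S_sym[of i j])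
  then show "integrable M (\<lambda>\<omega>. X \<omega> $ i * X \<omega> $ j)"
    "expectation (\<lambda>\<omega>. X \<omega> $ i * X \<omega> $ j) = S $ i $ j"
    unfolding polar using lin(3,4)[of ?b] lin(3,4)[of "axis i 1"] lin(3,4)[of "axis j 1"]
    by (simp_all add: entry)
qed

end

section \<open>Independent sources of randomness\<close>

lemma borel_measurable_matrix_vector_mult[measurable]:
  fixes D :: "real^'n^'m"
  shows "g \<in> borel_measurable N \<Longrightarrow> (\<lambda>\<omega>. D *v g \<omega>) \<in> borel_measurable N"
  by (rule measurable_compose[OF _ borel_measurable_continuous_onI])
     (auto intro: linear_continuous_on matrix_vector_mul_bounded_linear)

lemma borel_measurable_vec_nth[measurable]:
  fixes g :: "'a \<Rightarrow> real^'n"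
  assumes [measurable]: "g \<in> borel_measurable N"
  shows "(\<lambda>\<omega>. g \<omega> $ k) \<in> borel_measurable N"
proof -
  have "(\<lambda>\<omega>. g \<omega> $ k) = (\<lambda>\<omega>. g \<omega> \<bullet> axis k 1)"
    by (simp add: inner_axis)
  also have "\<dots> \<in> borel_measurable N"
    by measurable
  finally show ?thesis .
qed

lemma Int_stable_gen_events: "Int_stable (gen_events M N f)"
  unfolding gen_events_def Int_stable_def
proof safe
  fix A B assume "A \<in> sets N" "B \<in> sets N"
  then show "\<exists>C. (f -` A \<inter> space M) \<inter> (f -` B \<inter> space M) = f -` C \<inter> space M \<and> C \<in> sets N"
    by (intro exI[of _ "A \<inter> B"]) auto
qed

lemma measurable_sigma_gen_events:
  assumes "gen_events M N f \<subseteq> G" "G \<subseteq> Pow (space M)" "f \<in> space M \<rightarrow> space N"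
  shows "f \<in> measurable (sigma (space M) G) N"
proof (rule measurableI)
  show "f x \<in> space N" if "x \<in> space (sigma (space M) G)" for x
    using that assms(2,3) by (auto simp: space_measure_of_conv)
  show "f -` A \<inter> space (sigma (space M) G) \<in> sets (sigma (space M) G)" if "A \<in> sets N" for A
  proof -
    have "f -` A \<inter> space M \<in> G"
      using that assms(1) unfolding gen_events_def by blast
    then show ?thesis
      using assms(2) by (simp add: space_measure_of_conv sets_measure_of_conv)
  qed
qed

lemma (in prob_space) indep_var_sigma_Union:
  fixes F :: "'i \<Rightarrow> 'a set set"
  assumes indep: "indep_sets F I" and stable: "\<And>i. i \<in> I \<Longrightarrow> Int_stable (F i)"
    and J: "J1 \<union> J2 \<subseteq> I" "J1 \<inter> J2 = {}"
    and X: "X \<in> measurable (sigma (space M) (\<Union>i\<in>J1. F i)) N1"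
    and Y: "Y \<in> measurable (sigma (space M) (\<Union>i\<in>J2. F i)) N2"
  shows "indep_var N1 X N2 Y"
proof -
  let ?J = "case_bool J1 J2" and ?G = "\<lambda>J. sigma (space M) (\<Union>i\<in>J. F i)"
  have events: "(\<Union>i\<in>J. F i) \<subseteq> events" if "J \<subseteq> I" for J
    using indep that unfolding indep_sets_def by blast
  have sets_G: "sets (?G J) = sigma_sets (space M) (\<Union>i\<in>J. F i)" if "J \<subseteq> I" for J
    using events[OF that] sets.space_closed by (intro sets_measure_of) (rule order_trans)
  have sets_G_events: "sets (?G J) \<subseteq> events" if "J \<subseteq> I" for J
    unfolding sets_G[OF that] using events[OF that] by (rule sets.sigma_sets_subset)
  have rv: "f \<in> measurable M N" if "f \<in> measurable (?G J) N" "J \<subseteq> I" for f N J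
    using sets_G_events[OF that(2)]
    by (intro measurable_from_subalg[OF _ that(1)]) (simp add: subalgebra_def space_measure_of_conv)
  have "indep_sets (\<lambda>b. sigma_sets (space M) (\<Union>i\<in>?J b. F i)) UNIV"
  proof (rule indep_sets_collect_sigma)
    show "indep_sets F (\<Union>b\<in>UNIV. ?J b)"
      using J by (intro indep_sets_mono_index[OF _ indep]) (auto split: bool.splits)
    show "Int_stable (F i)" if "i \<in> ?J b" for i b
      using J that by (intro stable) (auto split: bool.splits)
    show "disjoint_family_on ?J UNIV"
      using J by (auto simp: disjoint_family_on_def split: bool.splits)
  qed
  then have indep_G: "indep_sets (\<lambda>b. sets (?G (?J b))) UNIV"
  proof (rule indep_sets_mono_sets)
    show "sets (?G (?J b)) \<subseteq> sigma_sets (space M) (\<Union>i\<in>?J b. F i)" for b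
      using J sets_G[of J1] sets_G[of J2] by (cases b) auto
  qed
  have preimages: "{f -` A \<inter> space M |A. A \<in> sets N} \<subseteq> sets (?G J)"
    if "f \<in> measurable (?G J) N" for f N J
    using measurable_sets[OF that] by (auto simp: space_measure_of_conv)
  show ?thesis
    unfolding indep_var_def indep_vars_def2
  proof (intro conjI ballI indep_sets_mono_sets[OF indep_G])
    show "random_variable (case_bool N1 N2 b) (case_bool X Y b)" for b
      using rv[OF X] rv[OF Y] J by (cases b) auto
    show "{case_bool X Y b -` A \<inter> space M |A. A \<in> sets (case_bool N1 N2 b)}
        \<subseteq> sets (?G (?J b))" for b
      using preimages[OF X] preimages[OF Y] by (cases b) auto
  qed
qed

lemma integral_suminf_summable_norm:
  fixes f :: "nat \<Rightarrow> 'a \<Rightarrow> real"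
  assumes int: "\<And>t. integrable M (f t)"
    and summable: "summable (\<lambda>t. \<integral>\<omega>. norm (f t \<omega>) \<partial>M)"
  shows "(\<integral>\<omega>. (\<Sum>t. f t \<omega>) \<partial>M) = (\<Sum>t. integral\<^sup>L M (f t))"
proof (rule integral_suminf[OF int _ summable])
  have [measurable]: "f t \<in> borel_measurable M" for t
    using int by auto
  have "(\<integral>\<^sup>+\<omega>. (\<Sum>t. ennreal (norm (f t \<omega>))) \<partial>M) = (\<Sum>t. \<integral>\<^sup>+\<omega>. ennreal (norm (f t \<omega>)) \<partial>M)"
    by (rule nn_integral_suminf) auto
  also have "\<dots> = (\<Sum>t. ennreal (\<integral>\<omega>. norm (f t \<omega>) \<partial>M))"
    using int by (intro arg_cong[where f=suminf] ext nn_integral_eq_integral) auto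
  also have "\<dots> = ennreal (\<Sum>t. \<integral>\<omega>. norm (f t \<omega>) \<partial>M)"
    by (rule suminf_ennreal2[OF _ summable]) auto
  finally have "(\<integral>\<^sup>+\<omega>. (\<Sum>t. ennreal (norm (f t \<omega>))) \<partial>M) \<noteq> \<infinity>"
    by simp
  then have "AE \<omega> in M. (\<Sum>t. ennreal (norm (f t \<omega>))) \<noteq> \<infinity>"
    by (intro nn_integral_noteq_infinite) auto
  then show "AE \<omega> in M. summable (\<lambda>t. norm (f t \<omega>))"
    by eventually_elim (auto intro: summable_suminf_not_top)
qed

section \<open>Discounted sums of an affine recursion\<close>

lemma discounted_sum_affine_recursion:
  fixes m :: "nat \<Rightarrow> real" and g V c :: real
  assumes g: "0 < g" "g < 1" and V: "0 \<le> V" "g * V < 1" and c: "0 \<le> c"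
    and m0: "0 \<le> m 0" and rec: "\<And>t. m (Suc t) = V * m t + c"
  shows "summable (\<lambda>t. g^t * m t)"
    and "(\<Sum>t. g^t * m t) = (m 0 + c * g / (1 - g)) / (1 - g * V)"
proof -
  let ?f = "\<lambda>t. g^t * m t"
  have "0 \<le> m t" for t
    using m0 V c by (induction t) (simp_all add: rec)
  then have f_nonneg: "0 \<le> ?f t" for t
    using g by simp
  have partial: "(\<Sum>t<Suc N. ?f t) = m 0 + g * V * (\<Sum>t<N. ?f t) + c * g * (\<Sum>t<N. g^t)" for N
    unfolding sum.lessThan_Suc_shift
    by (simp add: rec algebra_simps sum.distrib sum_distrib_left)
  have "(\<Sum>t<N. ?f t) \<le> (m 0 + c * g / (1 - g)) / (1 - g * V)" for N
  proof -
    have geometric: "(\<Sum>t<N. g^t) \<le> 1 / (1 - g)"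
      using g by (simp add: sum_gp_strict divide_right_mono)
    have "(\<Sum>t<N. ?f t) \<le> (\<Sum>t<Suc N. ?f t)"
      by (simp add: f_nonneg)
    also have "\<dots> \<le> m 0 + g * V * (\<Sum>t<N. ?f t) + c * g * (1 / (1 - g))"
      unfolding partial using geometric c g by (intro add_left_mono mult_left_mono) auto
    finally show ?thesis
      using V by (simp add: field_simps)
  qed
  then show summable: "summable ?f"
    by (rule summableI_nonneg_bounded[OF f_nonneg])
  have "(\<Sum>t. ?f t) = ?f 0 + (\<Sum>t. ?f (Suc t))"
    using suminf_split_head[OF summable] by simp
  also have "(\<Sum>t. ?f (Suc t)) = (\<Sum>t. g * V * ?f t + c * g * g^t)"
    by (simp add: rec algebra_simps)
  also have "\<dots> = g * V * (\<Sum>t. ?f t) + c * g / (1 - g)"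
    using summable g by (simp add: suminf_add[symmetric] suminf_mult summable_mult suminf_geometric)
  finally show "(\<Sum>t. ?f t) = (m 0 + c * g / (1 - g)) / (1 - g * V)"
    using V by (simp add: field_simps)
qed

corollary discounted_sum_affine_recursion_bounds:
  fixes m :: "nat \<Rightarrow> real" and g V c :: real
  assumes g: "0 < g" "g < 1" and V: "0 \<le> V" "g * V < 1" and c: "0 \<le> c"
    and m0: "0 \<le> m 0" and rec: "\<And>t. m (Suc t) = V * m t + c"
  shows "V \<noteq> 1 \<longrightarrow> (\<Sum>t. g^t * m t)
           = m 0 * (\<Sum>t. (g * V)^t) + c / (1 - V) * (1 / (1 - g) - 1 / (1 - g * V))"
    and "m 0 / (1 - g * V) \<le> (\<Sum>t. g^t * m t)"
proof -
  have sum: "(\<Sum>t. g^t * m t) = (m 0 + c * g / (1 - g)) / (1 - g * V)"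
    by (rule discounted_sum_affine_recursion(2)[OF assms])
  have geometric: "(\<Sum>t. (g * V)^t) = 1 / (1 - g * V)"
    using g V by (intro suminf_geometric) simp
  show "V \<noteq> 1 \<longrightarrow> (\<Sum>t. g^t * m t)
           = m 0 * (\<Sum>t. (g * V)^t) + c / (1 - V) * (1 / (1 - g) - 1 / (1 - g * V))"
  proof
    assume "V \<noteq> 1"
    then have nonzero: "1 - V \<noteq> 0" "1 - g \<noteq> 0" "1 - g * V \<noteq> 0"
      using g V by auto
    have "c / (1 - V) * (1 / (1 - g) - 1 / (1 - g * V))
        = c / (1 - V) * (g * (1 - V) / ((1 - g) * (1 - g * V)))"
      using nonzero by (simp add: field_simps)
    also have "\<dots> = c * g / ((1 - g) * (1 - g * V))"
      using nonzero by simp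
    finally show "(\<Sum>t. g^t * m t)
        = m 0 * (\<Sum>t. (g * V)^t) + c / (1 - V) * (1 / (1 - g) - 1 / (1 - g * V))"
      unfolding sum geometric by (simp add: add_divide_distrib)
  qed
  show "m 0 / (1 - g * V) \<le> (\<Sum>t. g^t * m t)"
    using g V c unfolding sum by (intro divide_right_mono) auto
qed

section \<open>Second moments of the closed loop\<close>

lemma V_K_sum_of_squares:
  "V_K A B C D K = (A - B \<bullet> K)^2 + C^2 + (D *v K) \<bullet> (D *v K)"
proof -
  have "outer B *v K = (B \<bullet> K) *\<^sub>R B"
    by (simp add: outer_def vec_eq_iff matrix_vector_mult_def inner_vec_def sum_distrib_left
        algebra_simps)
  moreover have "K \<bullet> ((transpose D ** D) *v K) = (D *v K) \<bullet> (D *v K)"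
    by (metis dot_lmul_matrix inner_commute matrix_vector_mul_assoc vector_transpose_matrix)
  ultimately show ?thesis
    unfolding V_K_def matrix_vector_mult_add_rdistrib inner_add_right
    by (simp add: power2_eq_square inner_commute algebra_simps)
qed

lemma V_K_nonneg: "0 \<le> V_K A B C D K"
  unfolding V_K_sum_of_squares by (intro add_nonneg_nonneg) auto

locale lqr_exploration = prob_space M
  for M :: "'w measure"
    and A C :: real and B :: "real^'n" and D Sig :: "real^'n^'n" and K :: "real^'n"
    and x0 :: "'w \<Rightarrow> real"
    and wx :: "nat \<Rightarrow> 'w \<Rightarrow> real" and wu :: "nat \<Rightarrow> 'w \<Rightarrow> real^'n"
    and xi :: "nat \<Rightarrow> 'w \<Rightarrow> real^'n"
    and xs :: "nat \<Rightarrow> 'w \<Rightarrow> real" and us :: "nat \<Rightarrow> 'w \<Rightarrow> real^'n" +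
  assumes Sigpd: "sym_pd Sig"
    and x0_rv: "x0 \<in> borel_measurable M"
    and x0_sq: "integrable M (\<lambda>\<omega>. (x0 \<omega>)^2)"
    and wx_rv: "\<And>t. wx t \<in> borel_measurable M"
    and wu_rv: "\<And>t. wu t \<in> borel_measurable M"
    and wx_int: "\<And>t. integrable M (wx t)" "\<And>t. integrable M (\<lambda>\<omega>. (wx t \<omega>)^2)"
    and wx_mom: "\<And>t. expectation (wx t) = 0" "\<And>t. expectation (\<lambda>\<omega>. (wx t \<omega>)^2) = 1"
    and wu_int: "\<And>t i. integrable M (\<lambda>\<omega>. wu t \<omega> $ i)"
                "\<And>t i j. integrable M (\<lambda>\<omega>. wu t \<omega> $ i * wu t \<omega> $ j)"
    and wu_mom: "\<And>t i. expectation (\<lambda>\<omega>. wu t \<omega> $ i) = 0"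
                "\<And>t i j. expectation (\<lambda>\<omega>. wu t \<omega> $ i * wu t \<omega> $ j) = (if i = j then 1 else 0)"
    and xi_dist: "\<And>t. distributed M lborel (xi t) (\<lambda>v. ennreal (gauss_dens Sig 0 v))"
    and indep: "indep_sets
                  (\<lambda>s. case s of Src0 \<Rightarrow> gen_events M borel x0
                              | SrcWX t \<Rightarrow> gen_events M borel (wx t)
                              | SrcWU t \<Rightarrow> gen_events M borel (wu t)
                              | SrcXi t \<Rightarrow> gen_events M borel (xi t)) UNIV"
    and u_def: "\<And>t \<omega>. us t \<omega> = - (xs t \<omega> *\<^sub>R K) + xi t \<omega>"
    and x_init: "\<And>\<omega>. xs 0 \<omega> = x0 \<omega>"
    and x_step: "\<And>t \<omega>. xs (Suc t) \<omega> =
                    (A + wx t \<omega> * C) * xs t \<omega> + (B + wu t \<omega> v* D) \<bullet> us t \<omega>"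
begin

definition src_events :: "src \<Rightarrow> 'w set set" where
  "src_events s = (case s of Src0 \<Rightarrow> gen_events M borel x0
                            | SrcWX t \<Rightarrow> gen_events M borel (wx t)
                            | SrcWU t \<Rightarrow> gen_events M borel (wu t)
                            | SrcXi t \<Rightarrow> gen_events M borel (xi t))"

definition sources :: "src set \<Rightarrow> 'w measure" where
  "sources J = sigma (space M) (\<Union>s\<in>J. src_events s)"

definition past :: "nat \<Rightarrow> src set" where
  "past t = insert Src0 (SrcWX ` {..<t} \<union> SrcWU ` {..<t} \<union> SrcXi ` {..<t})"

definition second_moment :: "nat \<Rightarrow> real" where
  "second_moment t = expectation (\<lambda>\<omega>. (xs t \<omega>)^2)"

lemma xi_rv: "xi t \<in> borel_measurable M"
  using distributed_measurable[OF xi_dist] by simp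

lemmas noise_rv[measurable] = x0_rv wx_rv wu_rv xi_rv

lemmas xi_moments = gauss_moments[OF Sigpd xi_dist]

lemma xs_Suc:
  "xs (Suc t) \<omega> = (A + wx t \<omega> * C) * xs t \<omega> + B \<bullet> us t \<omega> + wu t \<omega> \<bullet> (D *v us t \<omega>)"
  unfolding x_step by (simp add: inner_add_left dot_lmul_matrix)

lemma xs_rv[measurable]: "xs t \<in> borel_measurable M"
  by (induction t) (simp_all add: x_init xs_Suc[abs_def] u_def)

lemma measurable_sources:
  fixes f :: "'w \<Rightarrow> 'b::topological_space"
  assumes "s \<in> J" "src_events s = gen_events M borel f"
  shows "f \<in> borel_measurable (sources J)"
  unfolding sources_def
proof (rule measurable_sigma_gen_events)
  show "gen_events M borel f \<subseteq> (\<Union>s\<in>J. src_events s)"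
    using assms by blast
  have "src_events s \<subseteq> Pow (space M)" for s
    by (cases s) (auto simp: src_events_def gen_events_def)
  then show "(\<Union>s\<in>J. src_events s) \<subseteq> Pow (space M)"
    by blast
qed simp

lemma noise_measurable_sources:
  shows "Src0 \<in> J \<Longrightarrow> x0 \<in> borel_measurable (sources J)"
    and "SrcWX t \<in> J \<Longrightarrow> wx t \<in> borel_measurable (sources J)"
    and "SrcWU t \<in> J \<Longrightarrow> wu t \<in> borel_measurable (sources J)"
    and "SrcXi t \<in> J \<Longrightarrow> xi t \<in> borel_measurable (sources J)"
  by (auto intro!: measurable_sources simp: src_events_def)

lemma xs_measurable_sources: "past t \<subseteq> J \<Longrightarrow> xs t \<in> borel_measurable (sources J)"
proof (induction t)
  case 0
  then show ?case
    using noise_measurable_sources(1)[of J] by (simp add: x_init past_def)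
next
  case (Suc t)
  have "past t \<subseteq> J"
    using Suc.prems unfolding past_def by auto
  then have [measurable]: "xs t \<in> borel_measurable (sources J)"
    by (rule Suc.IH)
  have [measurable]: "wx t \<in> borel_measurable (sources J)" "wu t \<in> borel_measurable (sources J)"
    "xi t \<in> borel_measurable (sources J)"
    using Suc.prems by (auto intro!: noise_measurable_sources simp: past_def)
  show ?case
    unfolding xs_Suc[abs_def] u_def by measurable
qed

lemma indep_sources_integral_mult:
  fixes X Y :: "'w \<Rightarrow> real"
  assumes "J1 \<inter> J2 = {}"
    and "X \<in> borel_measurable (sources J1)" "Y \<in> borel_measurable (sources J2)"
    and "integrable M X" "integrable M Y"
  shows "integrable M (\<lambda>\<omega>. X \<omega> * Y \<omega>)"
    and "expectation (\<lambda>\<omega>. X \<omega> * Y \<omega>) = expectation X * expectation Y"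
proof -
  have "indep_var borel X borel Y"
  proof (rule indep_var_sigma_Union[where F = src_events and I = UNIV])
    show "indep_sets src_events UNIV"
      using indep unfolding src_events_def[abs_def] .
    show "Int_stable (src_events s)" for s
      by (cases s) (simp_all add: src_events_def Int_stable_gen_events)
  qed (use assms in \<open>simp_all add: sources_def\<close>)
  with assms(4,5) show "integrable M (\<lambda>\<omega>. X \<omega> * Y \<omega>)"
    "expectation (\<lambda>\<omega>. X \<omega> * Y \<omega>) = expectation X * expectation Y"
    by (simp_all add: indep_var_integrable indep_var_lebesgue_integral)
qed

definition noise_affine :: "nat \<Rightarrow> real \<Rightarrow> real \<Rightarrow> real^'n \<Rightarrow> 'w \<Rightarrow> real" where
  "noise_affine t c0 c1 d \<omega> = c0 + c1 * wx t \<omega> + wu t \<omega> \<bullet> d"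

lemma noise_affine_measurable_sources:
  assumes "SrcWX t \<in> J" "SrcWU t \<in> J"
  shows "noise_affine t c0 c1 d \<in> borel_measurable (sources J)"
  using noise_measurable_sources(2)[OF assms(1)] noise_measurable_sources(3)[OF assms(2)]
  unfolding noise_affine_def[abs_def] by measurable

lemma wu_inner:
  shows "integrable M (\<lambda>\<omega>. wu t \<omega> \<bullet> d)" "expectation (\<lambda>\<omega>. wu t \<omega> \<bullet> d) = 0"
proof -
  have eq: "(\<lambda>\<omega>. wu t \<omega> \<bullet> d) = (\<lambda>\<omega>. \<Sum>k\<in>UNIV. d $ k * wu t \<omega> $ k)"
    by (simp add: inner_vec_def mult.commute)
  show "integrable M (\<lambda>\<omega>. wu t \<omega> \<bullet> d)" "expectation (\<lambda>\<omega>. wu t \<omega> \<bullet> d) = 0"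
    unfolding eq using wu_int wu_mom by simp_all
qed

lemma wx_wu_inner:
  shows "integrable M (\<lambda>\<omega>. wx t \<omega> * (wu t \<omega> \<bullet> d))"
    and "expectation (\<lambda>\<omega>. wx t \<omega> * (wu t \<omega> \<bullet> d)) = 0"
proof -
  have "(\<lambda>\<omega>. wu t \<omega> \<bullet> d) \<in> borel_measurable (sources {SrcWU t})"
    using noise_measurable_sources(3)[of t "{SrcWU t}"] by measurable
  from indep_sources_integral_mult[OF _ noise_measurable_sources(2)[of t "{SrcWX t}"] this]
  show "integrable M (\<lambda>\<omega>. wx t \<omega> * (wu t \<omega> \<bullet> d))"
    "expectation (\<lambda>\<omega>. wx t \<omega> * (wu t \<omega> \<bullet> d)) = 0"
    using wx_int wx_mom wu_inner by simp_all
qed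

lemma wu_inner_mult:
  shows "integrable M (\<lambda>\<omega>. (wu t \<omega> \<bullet> d) * (wu t \<omega> \<bullet> e))"
    and "expectation (\<lambda>\<omega>. (wu t \<omega> \<bullet> d) * (wu t \<omega> \<bullet> e)) = d \<bullet> e"
proof -
  have eq: "(\<lambda>\<omega>. (wu t \<omega> \<bullet> d) * (wu t \<omega> \<bullet> e))
      = (\<lambda>\<omega>. \<Sum>k\<in>UNIV. \<Sum>l\<in>UNIV. (d $ k * e $ l) * (wu t \<omega> $ k * wu t \<omega> $ l))"
    by (simp add: inner_vec_def sum_product algebra_simps)
  show "integrable M (\<lambda>\<omega>. (wu t \<omega> \<bullet> d) * (wu t \<omega> \<bullet> e))"
    unfolding eq using wu_int by simp
  have "expectation (\<lambda>\<omega>. (wu t \<omega> \<bullet> d) * (wu t \<omega> \<bullet> e))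
      = (\<Sum>k\<in>UNIV. \<Sum>l\<in>UNIV. (d $ k * e $ l) * (if k = l then 1 else 0))"
    unfolding eq using wu_int wu_mom by simp
  also have "\<dots> = d \<bullet> e"
    by (simp add: inner_vec_def if_distrib[of "\<lambda>x. _ * x"] sum.delta cong: if_cong)
  finally show "expectation (\<lambda>\<omega>. (wu t \<omega> \<bullet> d) * (wu t \<omega> \<bullet> e)) = d \<bullet> e" .
qed

lemma noise_affine_mult:
  shows "integrable M (\<lambda>\<omega>. noise_affine t c0 c1 d \<omega> * noise_affine t e0 e1 e \<omega>)"
    and "expectation (\<lambda>\<omega>. noise_affine t c0 c1 d \<omega> * noise_affine t e0 e1 e \<omega>)
           = c0 * e0 + c1 * e1 + d \<bullet> e"
proof -
  have eq: "(\<lambda>\<omega>. noise_affine t c0 c1 d \<omega> * noise_affine t e0 e1 e \<omega>)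
      = (\<lambda>\<omega>. c0 * e0 + (c0 * e1 + c1 * e0) * wx t \<omega> + c0 * (wu t \<omega> \<bullet> e)
          + e0 * (wu t \<omega> \<bullet> d) + (c1 * e1) * (wx t \<omega>)^2 + c1 * (wx t \<omega> * (wu t \<omega> \<bullet> e))
          + e1 * (wx t \<omega> * (wu t \<omega> \<bullet> d)) + (wu t \<omega> \<bullet> d) * (wu t \<omega> \<bullet> e))"
    by (simp add: noise_affine_def fun_eq_iff algebra_simps power2_eq_square)
  show "integrable M (\<lambda>\<omega>. noise_affine t c0 c1 d \<omega> * noise_affine t e0 e1 e \<omega>)"
    unfolding eq using wx_int wu_inner wx_wu_inner wu_inner_mult by simp
  show "expectation (\<lambda>\<omega>. noise_affine t c0 c1 d \<omega> * noise_affine t e0 e1 e \<omega>)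
      = c0 * e0 + c1 * e1 + d \<bullet> e"
    unfolding eq using wx_int wx_mom wu_inner wx_wu_inner wu_inner_mult by (simp add: prob_space)
qed

abbreviation closed_loop_gain :: "nat \<Rightarrow> 'w \<Rightarrow> real" where
  "closed_loop_gain t \<equiv> noise_affine t (A - B \<bullet> K) C (- (D *v K))"

abbreviation input_gain :: "nat \<Rightarrow> 'n \<Rightarrow> 'w \<Rightarrow> real" where
  "input_gain t i \<equiv> noise_affine t (B $ i) 0 (column i D)"

lemma xs_Suc_gains:
  "xs (Suc t) \<omega> = xs t \<omega> * closed_loop_gain t \<omega> + (\<Sum>i\<in>UNIV. xi t \<omega> $ i * input_gain t i \<omega>)"
proof -
  let ?x = "xs t \<omega>" and ?z = "wu t \<omega>" and ?v = "xi t \<omega>"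
  have "B \<bullet> ?v = (\<Sum>i\<in>UNIV. ?v $ i * B $ i)"
    by (simp add: inner_vec_def mult.commute)
  moreover have "xs (Suc t) \<omega> = (A + wx t \<omega> * C) * ?x - ?x * (B \<bullet> K) + B \<bullet> ?v
      - ?x * (?z \<bullet> (D *v K)) + ?z \<bullet> (D *v ?v)"
    unfolding xs_Suc u_def
    by (simp add: inner_add_right matrix_vector_right_distrib matrix_vector_mult_diff_distrib
        matrix_vector_mult_scaleR algebra_simps)
  ultimately show ?thesis
    unfolding inner_matrix_vector_mult_columns[of ?z D ?v]
    by (simp add: noise_affine_def sum.distrib[symmetric] algebra_simps)
qed

lemma gram_entry:
  "(outer B + transpose D ** D) $ i $ j = B $ i * B $ j + column i D \<bullet> column j D"
  by (simp add: outer_def matrix_matrix_mult_def transpose_def column_def inner_vec_def)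

lemma sources_disjoint:
  shows "past t \<inter> {SrcWX t, SrcWU t} = {}"
    and "(past t \<union> {SrcWX t, SrcWU t}) \<inter> {SrcXi t} = {}"
    and "{SrcWX t, SrcWU t} \<inter> {SrcXi t} = {}"
    and "past t \<inter> {SrcXi t} = {}"
  unfolding past_def by auto

lemma noise_affine_measurable_step:
  "noise_affine t c0 c1 d \<in> borel_measurable (sources ({SrcWX t, SrcWU t} \<union> J))"
  by (rule noise_affine_measurable_sources) auto

lemma xi_measurable_step: "xi t \<in> borel_measurable (sources {SrcXi t})"
  by (simp add: noise_measurable_sources)

lemma closed_loop_term:
  assumes "integrable M (\<lambda>\<omega>. (xs t \<omega>)^2)"
  shows "integrable M (\<lambda>\<omega>. (xs t \<omega>)^2 * (closed_loop_gain t \<omega> * closed_loop_gain t \<omega>))"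
    and "expectation (\<lambda>\<omega>. (xs t \<omega>)^2 * (closed_loop_gain t \<omega> * closed_loop_gain t \<omega>))
           = second_moment t * V_K A B C D K"
proof -
  have [measurable]: "xs t \<in> borel_measurable (sources (past t))"
    "closed_loop_gain t \<in> borel_measurable (sources {SrcWX t, SrcWU t})"
    using xs_measurable_sources[of t] noise_affine_measurable_step[of t _ _ _ "{}"] by simp_all
  have "(\<lambda>\<omega>. (xs t \<omega>)^2) \<in> borel_measurable (sources (past t))"
    "(\<lambda>\<omega>. closed_loop_gain t \<omega> * closed_loop_gain t \<omega>) \<in> borel_measurable (sources {SrcWX t, SrcWU t})"
    by measurable
  from indep_sources_integral_mult[OF sources_disjoint(1) this assms noise_affine_mult(1)]
  show "integrable M (\<lambda>\<omega>. (xs t \<omega>)^2 * (closed_loop_gain t \<omega> * closed_loop_gain t \<omega>))"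
    "expectation (\<lambda>\<omega>. (xs t \<omega>)^2 * (closed_loop_gain t \<omega> * closed_loop_gain t \<omega>))
       = second_moment t * V_K A B C D K"
    using noise_affine_mult(2)
    by (simp_all add: second_moment_def V_K_sum_of_squares power2_eq_square)
qed

lemma cross_term:
  assumes x_int: "integrable M (xs t)"
  shows "integrable M (\<lambda>\<omega>. (xs t \<omega> * (closed_loop_gain t \<omega> * input_gain t i \<omega>)) * xi t \<omega> $ i)"
    and "expectation (\<lambda>\<omega>. (xs t \<omega> * (closed_loop_gain t \<omega> * input_gain t i \<omega>)) * xi t \<omega> $ i) = 0"
proof -
  define W where "W = {SrcWX t, SrcWU t}"
  have [measurable]: "xs t \<in> borel_measurable (sources (past t))"
    "xs t \<in> borel_measurable (sources (past t \<union> W))"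
    by (simp_all add: xs_measurable_sources)
  have [measurable]: "noise_affine t c0 c1 d \<in> borel_measurable (sources W)"
    "noise_affine t c0 c1 d \<in> borel_measurable (sources (past t \<union> W))" for c0 c1 d
    by (simp_all add: noise_affine_measurable_sources W_def)
  have [measurable]: "xi t \<in> borel_measurable (sources {SrcXi t})"
    by (rule xi_measurable_step)
  have meas: "(\<lambda>\<omega>. closed_loop_gain t \<omega> * input_gain t i \<omega>) \<in> borel_measurable (sources W)"
    "(\<lambda>\<omega>. xs t \<omega> * (closed_loop_gain t \<omega> * input_gain t i \<omega>))
       \<in> borel_measurable (sources (past t \<union> W))"
    "(\<lambda>\<omega>. xi t \<omega> $ i) \<in> borel_measurable (sources {SrcXi t})"
    by measurable
  have "integrable M (\<lambda>\<omega>. xs t \<omega> * (closed_loop_gain t \<omega> * input_gain t i \<omega>))"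
    using indep_sources_integral_mult(1)[OF sources_disjoint(1)[of t, folded W_def] _ meas(1) x_int
        noise_affine_mult(1)]
    by simp
  from indep_sources_integral_mult[OF sources_disjoint(2)[of t, folded W_def] meas(2,3) this xi_moments(1)]
  show "integrable M (\<lambda>\<omega>. (xs t \<omega> * (closed_loop_gain t \<omega> * input_gain t i \<omega>)) * xi t \<omega> $ i)"
    "expectation (\<lambda>\<omega>. (xs t \<omega> * (closed_loop_gain t \<omega> * input_gain t i \<omega>)) * xi t \<omega> $ i) = 0"
    by (simp_all add: xi_moments(2))
qed

lemma exploration_term:
  shows "integrable M (\<lambda>\<omega>. (input_gain t i \<omega> * input_gain t j \<omega>) * (xi t \<omega> $ i * xi t \<omega> $ j))"
    and "expectation (\<lambda>\<omega>. (input_gain t i \<omega> * input_gain t j \<omega>) * (xi t \<omega> $ i * xi t \<omega> $ j))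
           = (outer B + transpose D ** D) $ i $ j * Sig $ i $ j"
proof -
  have [measurable]: "noise_affine t c0 c1 d \<in> borel_measurable (sources {SrcWX t, SrcWU t})"
    "xi t \<in> borel_measurable (sources {SrcXi t})" for c0 c1 d
    using noise_affine_measurable_step[of t _ _ _ "{}"] xi_measurable_step by simp_all
  have "(\<lambda>\<omega>. input_gain t i \<omega> * input_gain t j \<omega>) \<in> borel_measurable (sources {SrcWX t, SrcWU t})"
    "(\<lambda>\<omega>. xi t \<omega> $ i * xi t \<omega> $ j) \<in> borel_measurable (sources {SrcXi t})"
    by measurable
  from indep_sources_integral_mult[OF sources_disjoint(3) this noise_affine_mult(1) xi_moments(3)]
  show "integrable M (\<lambda>\<omega>. (input_gain t i \<omega> * input_gain t j \<omega>) * (xi t \<omega> $ i * xi t \<omega> $ j))"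
    "expectation (\<lambda>\<omega>. (input_gain t i \<omega> * input_gain t j \<omega>) * (xi t \<omega> $ i * xi t \<omega> $ j))
       = (outer B + transpose D ** D) $ i $ j * Sig $ i $ j"
    using noise_affine_mult(2) xi_moments(4) by (simp_all only: gram_entry) simp
qed

lemma xs_Suc_square:
  "(xs (Suc t) \<omega>)^2 = (xs t \<omega>)^2 * (closed_loop_gain t \<omega> * closed_loop_gain t \<omega>)
     + 2 * (\<Sum>i\<in>UNIV. (xs t \<omega> * (closed_loop_gain t \<omega> * input_gain t i \<omega>)) * xi t \<omega> $ i)
     + (\<Sum>i\<in>UNIV. \<Sum>j\<in>UNIV. (input_gain t i \<omega> * input_gain t j \<omega>) * (xi t \<omega> $ i * xi t \<omega> $ j))"
  unfolding xs_Suc_gains power2_eq_square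
  by (simp add: sum_product sum_distrib_left algebra_simps)

lemma second_moment_Suc:
  assumes sq_int: "integrable M (\<lambda>\<omega>. (xs t \<omega>)^2)"
  shows "integrable M (\<lambda>\<omega>. (xs (Suc t) \<omega>)^2)"
    and "second_moment (Suc t)
           = V_K A B C D K * second_moment t + trace (Sig ** (outer B + transpose D ** D))"
proof -
  have x_int: "integrable M (xs t)"
    by (rule square_integrable_imp_integrable[OF xs_rv sq_int])
  note terms = closed_loop_term[OF sq_int] cross_term[OF x_int] exploration_term
  show "integrable M (\<lambda>\<omega>. (xs (Suc t) \<omega>)^2)"
    unfolding xs_Suc_square using terms by simp
  have "transpose Sig = Sig"
    using Sigpd by (simp add: sym_pd_def)
  then have "trace (Sig ** (outer B + transpose D ** D))
      = (\<Sum>i\<in>UNIV. \<Sum>j\<in>UNIV. (outer B + transpose D ** D) $ i $ j * Sig $ i $ j)"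
    by (subst trace_mul_sym) (rule trace_mult_symmetric)
  then show "second_moment (Suc t)
      = V_K A B C D K * second_moment t + trace (Sig ** (outer B + transpose D ** D))"
    unfolding second_moment_def[of "Suc t"] xs_Suc_square using terms by simp
qed

lemma xs_square_integrable: "integrable M (\<lambda>\<omega>. (xs t \<omega>)^2)"
  by (induction t) (simp_all add: x_init x0_sq second_moment_Suc(1))

lemma second_moment_0: "second_moment 0 = expectation (\<lambda>\<omega>. (x0 \<omega>)^2)"
  by (simp add: second_moment_def x_init)

lemma second_moment_nonneg: "0 \<le> second_moment t"
  unfolding second_moment_def by (rule integral_nonneg_AE) simp

lemma second_moment_recursion:
  "second_moment (Suc t) = V_K A B C D K * second_moment t + trace (Sig ** (outer B + transpose D ** D))"
  by (rule second_moment_Suc(2)[OF xs_square_integrable])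

section \<open>The expected discounted cost\<close>

definition stage_cost :: "real \<Rightarrow> real^'n^'n \<Rightarrow> real \<Rightarrow> nat \<Rightarrow> 'w \<Rightarrow> real" where
  "stage_cost Q R tau t \<omega> = Q * (xs t \<omega>)^2 + us t \<omega> \<bullet> (R *v us t \<omega>)
     + tau * ln (policy_dens K Sig (xs t \<omega>) (us t \<omega>))"

lemma log_policy_dens:
  "ln (policy_dens K Sig (xs t \<omega>) (us t \<omega>))
     = - (1/2) * (xi t \<omega> \<bullet> (matrix_inv Sig *v xi t \<omega>)) - ln ((2 * pi) ^ CARD('n) * det Sig) / 2"
proof -
  have normalizer: "0 < (2 * pi) ^ CARD('n) * det Sig"
    by (rule gauss_normalizer_pos[OF xi_dist])
  moreover have "0 < (2 * pi) ^ CARD('n)"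
    by simp
  ultimately have "0 < det Sig"
    by (simp only: zero_less_mult_iff) linarith
  have "policy_dens K Sig (xs t \<omega>) (us t \<omega>)
      = exp (- (1/2) * (xi t \<omega> \<bullet> (matrix_inv Sig *v xi t \<omega>))) / sqrt ((2 * pi) ^ CARD('n) * det Sig)"
    unfolding policy_dens_def gauss_dens_def u_def by simp
  then show ?thesis
    using normalizer \<open>0 < det Sig\<close> by (simp add: ln_div ln_sqrt)
qed

lemma xi_quadratic_form:
  shows "integrable M (\<lambda>\<omega>. xi t \<omega> \<bullet> (N *v xi t \<omega>))"
    and "expectation (\<lambda>\<omega>. xi t \<omega> \<bullet> (N *v xi t \<omega>)) = trace (N ** Sig)"
proof -
  have "transpose Sig = Sig"
    using Sigpd by (simp add: sym_pd_def)
  then show "integrable M (\<lambda>\<omega>. xi t \<omega> \<bullet> (N *v xi t \<omega>))"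
    "expectation (\<lambda>\<omega>. xi t \<omega> \<bullet> (N *v xi t \<omega>)) = trace (N ** Sig)"
    unfolding quadratic_form_sum using xi_moments(3,4) by (simp_all add: trace_mult_symmetric)
qed

lemma xs_xi_uncorrelated:
  shows "integrable M (\<lambda>\<omega>. xs t \<omega> * (xi t \<omega> \<bullet> a))"
    and "expectation (\<lambda>\<omega>. xs t \<omega> * (xi t \<omega> \<bullet> a)) = 0"
proof -
  have x_meas: "xs t \<in> borel_measurable (sources (past t))"
    by (simp add: xs_measurable_sources)
  have xi_meas: "(\<lambda>\<omega>. xi t \<omega> $ j) \<in> borel_measurable (sources {SrcXi t})" for j
    using xi_measurable_step by measurable
  have x_int: "integrable M (xs t)"
    by (rule square_integrable_imp_integrable[OF xs_rv xs_square_integrable])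
  have coords: "integrable M (\<lambda>\<omega>. xs t \<omega> * xi t \<omega> $ j)"
    "expectation (\<lambda>\<omega>. xs t \<omega> * xi t \<omega> $ j) = 0" for j
    using indep_sources_integral_mult[OF sources_disjoint(4) x_meas xi_meas x_int xi_moments(1)]
      xi_moments(2)
    by simp_all
  have "(\<lambda>\<omega>. xs t \<omega> * (xi t \<omega> \<bullet> a)) = (\<lambda>\<omega>. \<Sum>j\<in>UNIV. a $ j * (xs t \<omega> * xi t \<omega> $ j))"
    by (simp add: inner_vec_def sum_distrib_left algebra_simps)
  then show "integrable M (\<lambda>\<omega>. xs t \<omega> * (xi t \<omega> \<bullet> a))"
    "expectation (\<lambda>\<omega>. xs t \<omega> * (xi t \<omega> \<bullet> a)) = 0"
    using coords by simp_all
qed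

lemma control_cost:
  assumes R: "transpose R = R"
  shows "integrable M (\<lambda>\<omega>. us t \<omega> \<bullet> (R *v us t \<omega>))"
    and "expectation (\<lambda>\<omega>. us t \<omega> \<bullet> (R *v us t \<omega>))
           = K \<bullet> (R *v K) * second_moment t + trace (Sig ** R)"
proof -
  have expand: "us t \<omega> \<bullet> (R *v us t \<omega>) = K \<bullet> (R *v K) * (xs t \<omega>)^2
      - 2 * (xs t \<omega> * (xi t \<omega> \<bullet> (R *v K))) + xi t \<omega> \<bullet> (R *v xi t \<omega>)" for \<omega>
  proof -
    let ?x = "xs t \<omega>" and ?v = "xi t \<omega>"
    have "us t \<omega> = ?v - ?x *\<^sub>R K"
      by (simp add: u_def)
    then have "us t \<omega> \<bullet> (R *v us t \<omega>)
        = ?v \<bullet> (R *v ?v) - ?x * (?v \<bullet> (R *v K)) - ?x * (K \<bullet> (R *v ?v)) + ?x * ?x * (K \<bullet> (R *v K))"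
      by (simp add: matrix_vector_mult_diff_distrib matrix_vector_mult_scaleR inner_diff_left
          inner_diff_right) (simp add: algebra_simps)
    also have "K \<bullet> (R *v ?v) = ?v \<bullet> (R *v K)"
      by (rule symmetric_matrix_inner_swap[OF R])
    finally show ?thesis
      by (simp add: power2_eq_square)
  qed
  show "integrable M (\<lambda>\<omega>. us t \<omega> \<bullet> (R *v us t \<omega>))"
    unfolding expand using xs_square_integrable xs_xi_uncorrelated(1) xi_quadratic_form(1) by simp
  show "expectation (\<lambda>\<omega>. us t \<omega> \<bullet> (R *v us t \<omega>)) = K \<bullet> (R *v K) * second_moment t + trace (Sig ** R)"
    unfolding expand using xs_square_integrable xs_xi_uncorrelated xi_quadratic_form
      trace_mul_sym[of R Sig]
    by (simp add: second_moment_def)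
qed

lemma stage_cost_eq:
  "stage_cost Q R tau t \<omega> = Q * (xs t \<omega>)^2 + us t \<omega> \<bullet> (R *v us t \<omega>)
     - tau / 2 * (xi t \<omega> \<bullet> (matrix_inv Sig *v xi t \<omega>))
     - tau / 2 * ln ((2 * pi) ^ CARD('n) * det Sig)"
  unfolding stage_cost_def log_policy_dens by (simp add: algebra_simps)

lemma stage_cost_expectation:
  assumes "transpose R = R"
  shows "integrable M (stage_cost Q R tau t)"
    and "expectation (stage_cost Q R tau t) = (Q + K \<bullet> (R *v K)) * second_moment t
           + (trace (Sig ** R) - tau / 2 * (real CARD('n) + ln ((2 * pi) ^ CARD('n) * det Sig)))"
proof -
  have "trace (matrix_inv Sig ** Sig) = real CARD('n)"
    by (simp add: matrix_inv_left[OF sym_pd_invertible[OF Sigpd]] trace_I)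
  then show "integrable M (stage_cost Q R tau t)"
    "expectation (stage_cost Q R tau t) = (Q + K \<bullet> (R *v K)) * second_moment t
      + (trace (Sig ** R) - tau / 2 * (real CARD('n) + ln ((2 * pi) ^ CARD('n) * det Sig)))"
    unfolding stage_cost_eq[abs_def]
    using xs_square_integrable control_cost[OF assms] xi_quadratic_form
    by (simp_all add: second_moment_def prob_space algebra_simps)
qed

lemma stage_cost_abs_expectation_le:
  assumes Q: "0 \<le> Q" and R: "sym_pd R" and tau: "0 \<le> tau"
  shows "expectation (\<lambda>\<omega>. \<bar>stage_cost Q R tau t \<omega>\<bar>) \<le> (Q + K \<bullet> (R *v K)) * second_moment t
           + (trace (Sig ** R) + tau / 2 * (real CARD('n) + \<bar>ln ((2 * pi) ^ CARD('n) * det Sig)\<bar>))"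
proof -
  let ?q = "\<lambda>\<omega>. xi t \<omega> \<bullet> (matrix_inv Sig *v xi t \<omega>)"
    and ?l = "ln ((2 * pi) ^ CARD('n) * det Sig)"
  let ?h = "\<lambda>\<omega>. Q * (xs t \<omega>)^2 + us t \<omega> \<bullet> (R *v us t \<omega>) + tau / 2 * ?q \<omega> + tau / 2 * \<bar>?l\<bar>"
  have R_sym: "transpose R = R"
    using R by (simp add: sym_pd_def)
  have "\<bar>stage_cost Q R tau t \<omega>\<bar> \<le> ?h \<omega>" for \<omega>
  proof -
    have "0 \<le> Q * (xs t \<omega>)^2" "0 \<le> us t \<omega> \<bullet> (R *v us t \<omega>)" "0 \<le> tau / 2 * ?q \<omega>"
      "\<bar>tau / 2 * ?l\<bar> = tau / 2 * \<bar>?l\<bar>"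
      using Q tau sym_pd_quadratic_nonneg[OF R] sym_pd_inverse_quadratic_nonneg[OF Sigpd]
      by (simp_all add: abs_mult)
    then show ?thesis
      unfolding stage_cost_eq by linarith
  qed
  then have "expectation (\<lambda>\<omega>. \<bar>stage_cost Q R tau t \<omega>\<bar>) \<le> expectation ?h"
    using stage_cost_expectation(1)[OF R_sym] xs_square_integrable control_cost(1)[OF R_sym]
      xi_quadratic_form(1)
    by (intro integral_mono) auto
  also have "\<dots> = (Q + K \<bullet> (R *v K)) * second_moment t
      + (trace (Sig ** R) + tau / 2 * (real CARD('n) + \<bar>?l\<bar>))"
    using xs_square_integrable control_cost[OF R_sym] xi_quadratic_form
      matrix_inv_left[OF sym_pd_invertible[OF Sigpd]]
    by (simp add: second_moment_def prob_space trace_I algebra_simps)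
  finally show ?thesis .
qed

lemma summable_discounted_second_moment:
  assumes gam: "0 < gam" "gam < 1" and stab: "gam * V_K A B C D K < 1"
  shows "summable (\<lambda>t. gam ^ t * second_moment t)"
  using discounted_sum_affine_recursion(1)[where m = second_moment, OF gam V_K_nonneg stab
      trace_sym_pd_gram_nonneg[OF Sigpd] second_moment_nonneg second_moment_recursion] .

lemma summable_discounted_abs_stage_cost:
  assumes Q: "0 \<le> Q" and R: "sym_pd R" and tau: "0 \<le> tau"
    and gam: "0 < gam" "gam < 1" and stab: "gam * V_K A B C D K < 1"
  shows "summable (\<lambda>t. expectation (\<lambda>\<omega>. norm (gam ^ t * stage_cost Q R tau t \<omega>)))"
proof (rule summable_comparison_test')
  let ?k = "Q + K \<bullet> (R *v K)"
    and ?c = "trace (Sig ** R) + tau / 2 * (real CARD('n) + \<bar>ln ((2 * pi) ^ CARD('n) * det Sig)\<bar>)"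
  have "summable (\<lambda>t. gam ^ t)"
    using gam by simp
  from summable_add[OF summable_mult[OF summable_discounted_second_moment[OF gam stab], of ?k]
      summable_mult2[OF this, of ?c]]
  show "summable (\<lambda>t. gam ^ t * (?k * second_moment t + ?c))"
    by (simp add: algebra_simps)
  show "norm (expectation (\<lambda>\<omega>. norm (gam ^ t * stage_cost Q R tau t \<omega>)))
      \<le> gam ^ t * (?k * second_moment t + ?c)" for t
    using stage_cost_abs_expectation_le[OF Q R tau, of t] gam
    by (simp add: abs_mult integral_nonneg_AE)
qed

lemma discounted_cost:
  assumes Q: "0 \<le> Q" and R: "sym_pd R" and tau: "0 \<le> tau"
    and gam: "0 < gam" "gam < 1" and stab: "gam * V_K A B C D K < 1"
  shows "expectation (\<lambda>\<omega>. \<Sum>t. gam ^ t * stage_cost Q R tau t \<omega>)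
       = (Q + K \<bullet> (R *v K)) * (\<Sum>t. gam ^ t * second_moment t)
         + (trace (Sig ** R) - tau / 2 * (real CARD('n) + ln ((2 * pi) ^ CARD('n) * det Sig)))
           / (1 - gam)"
proof -
  let ?k = "Q + K \<bullet> (R *v K)"
    and ?c = "trace (Sig ** R) - tau / 2 * (real CARD('n) + ln ((2 * pi) ^ CARD('n) * det Sig))"
  have R_sym: "transpose R = R"
    using R by (simp add: sym_pd_def)
  have int: "integrable M (\<lambda>\<omega>. gam ^ t * stage_cost Q R tau t \<omega>)" for t
    using stage_cost_expectation(1)[OF R_sym] by simp
  have "expectation (\<lambda>\<omega>. \<Sum>t. gam ^ t * stage_cost Q R tau t \<omega>)
      = (\<Sum>t. expectation (\<lambda>\<omega>. gam ^ t * stage_cost Q R tau t \<omega>))"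
    by (rule integral_suminf_summable_norm[OF int summable_discounted_abs_stage_cost[OF assms]])
  also have "\<dots> = (\<Sum>t. ?k * (gam ^ t * second_moment t) + ?c * gam ^ t)"
    by (simp add: stage_cost_expectation(2)[OF R_sym] algebra_simps)
  also have "\<dots> = ?k * (\<Sum>t. gam ^ t * second_moment t) + ?c * (\<Sum>t. gam ^ t)"
    using summable_discounted_second_moment[OF gam stab] gam
    by (simp add: suminf_add[symmetric] suminf_mult summable_mult summable_mult2 suminf_mult2)
  also have "(\<Sum>t. gam ^ t) = 1 / (1 - gam)"
    using gam by (simp add: suminf_geometric)
  finally show ?thesis
    by simp
qed

end

theorem lemma10:
  fixes M :: "'w measure"
    and A C Q gam tau :: real
    and B :: "real^'n" and D R Sig :: "real^'n^'n" and K :: "real^'n"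
    and x0 :: "'w \<Rightarrow> real"
    and wx :: "nat \<Rightarrow> 'w \<Rightarrow> real" and wu :: "nat \<Rightarrow> 'w \<Rightarrow> real^'n"
    and xi :: "nat \<Rightarrow> 'w \<Rightarrow> real^'n"
    and xs :: "nat \<Rightarrow> 'w \<Rightarrow> real" and us :: "nat \<Rightarrow> 'w \<Rightarrow> real^'n"
  assumes P: "prob_space M"
    and Qpos: "Q > 0" and Rpd: "sym_pd R"
    and gam: "0 < gam" "gam < 1" and tau: "tau > 0"
    \<comment> \<open>(K, Sigma) in Omega\<close>
    and Sigpd: "sym_pd Sig" and stab: "gam * V_K A B C D K < 1"
    \<comment> \<open>primitive random variables\<close>
    and x0_rv: "x0 \<in> borel_measurable M"
    and x0_sq: "integrable M (\<lambda>\<omega>. (x0 \<omega>)^2)"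
    and wx_rv: "\<And>t. wx t \<in> borel_measurable M"
    and wu_rv: "\<And>t. wu t \<in> borel_measurable M"
    and wx_int: "\<And>t. integrable M (wx t)" "\<And>t. integrable M (\<lambda>\<omega>. (wx t \<omega>)^2)"
    and wx_mom: "\<And>t. prob_space.expectation M (wx t) = 0"
                "\<And>t. prob_space.expectation M (\<lambda>\<omega>. (wx t \<omega>)^2) = 1"
    and wu_int: "\<And>t i. integrable M (\<lambda>\<omega>. wu t \<omega> $ i)"
                "\<And>t i j. integrable M (\<lambda>\<omega>. wu t \<omega> $ i * wu t \<omega> $ j)"
    and wu_mom: "\<And>t i. prob_space.expectation M (\<lambda>\<omega>. wu t \<omega> $ i) = 0"
                "\<And>t i j. prob_space.expectation M (\<lambda>\<omega>. wu t \<omega> $ i * wu t \<omega> $ j)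
                           = (if i = j then 1 else 0)"
    and xi_dist: "\<And>t. distributed M lborel (xi t) (\<lambda>v. ennreal (gauss_dens Sig 0 v))"
    and indep: "prob_space.indep_sets M
                  (\<lambda>s. case s of Src0 \<Rightarrow> gen_events M borel x0
                              | SrcWX t \<Rightarrow> gen_events M borel (wx t)
                              | SrcWU t \<Rightarrow> gen_events M borel (wu t)
                              | SrcXi t \<Rightarrow> gen_events M borel (xi t)) UNIV"
    \<comment> \<open>Gaussian policy u_t ~ N(-K x_t, Sigma) and the dynamics\<close>
    and u_def: "\<And>t \<omega>. us t \<omega> = - (xs t \<omega> *\<^sub>R K) + xi t \<omega>"
    and x_init: "\<And>\<omega>. xs 0 \<omega> = x0 \<omega>"
    and x_step: "\<And>t \<omega>. xs (Suc t) \<omega> =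
                    (A + wx t \<omega> * C) * xs t \<omega> + (B + wu t \<omega> v* D) \<bullet> us t \<omega>"
  defines "mu \<equiv> prob_space.expectation M (\<lambda>\<omega>. (x0 \<omega>)^2)"
    and "V \<equiv> V_K A B C D K"
    and "S \<equiv> (\<Sum>t. gam ^ t * prob_space.expectation M (\<lambda>\<omega>. (xs t \<omega>)^2))"
    and "f \<equiv> prob_space.expectation M (\<lambda>\<omega>. \<Sum>t. gam ^ t *
               (Q * (xs t \<omega>)^2 + us t \<omega> \<bullet> (R *v us t \<omega>)
                + tau * ln (policy_dens K Sig (xs t \<omega>) (us t \<omega>))))"
  shows "(V \<noteq> 1 \<longrightarrow>
           S = mu * (\<Sum>t. (gam * V) ^ t)
               + trace (Sig ** (outer B + transpose D ** D)) / (1 - V)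
                 * (1 / (1 - gam) - 1 / (1 - gam * V)))
       \<and> mu / (1 - gam * V) \<le> S
       \<and> S \<le> (f - (1 / (1 - gam)) * (trace (Sig ** R)
                 - tau / 2 * (real CARD('n) + ln ((2 * pi) ^ CARD('n) * det Sig)))) / Q"
proof -
  have "lqr_exploration M A C B D Sig K x0 wx wu xi xs us"
    unfolding lqr_exploration_def lqr_exploration_axioms_def by (intro conjI allI; rule assms)
  then interpret lqr_exploration M A C B D Sig K x0 wx wu xi xs us .
  have S_eq: "S = (\<Sum>t. gam ^ t * second_moment t)"
    unfolding S_def second_moment_def ..
  have mu_eq: "mu = second_moment 0"
    unfolding mu_def second_moment_0 ..
  note bounds = discounted_sum_affine_recursion_bounds[where m = second_moment, OF gam V_K_nonneg stab
      trace_sym_pd_gram_nonneg[OF Sigpd] second_moment_nonneg second_moment_recursion]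
  have "f - 1 / (1 - gam) * (trace (Sig ** R)
          - tau / 2 * (real CARD('n) + ln ((2 * pi) ^ CARD('n) * det Sig)))
      = (Q + K \<bullet> (R *v K)) * S"
    using discounted_cost[OF less_imp_le[OF Qpos] Rpd less_imp_le[OF tau] gam stab]
    unfolding f_def S_eq stage_cost_def by simp
  moreover have "0 \<le> second_moment 0 / (1 - gam * V_K A B C D K)"
    using second_moment_nonneg[of 0] stab by simp
  then have "0 \<le> S"
    using bounds(2) unfolding S_eq by linarith
  then have "Q * S \<le> (Q + K \<bullet> (R *v K)) * S"
    using sym_pd_quadratic_nonneg[OF Rpd] by (intro mult_right_mono) auto
  ultimately show ?thesis
    using bounds Qpos unfolding S_eq mu_eq V_def by (simp add: pos_le_divide_eq mult.commute)
qed

end
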